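(* Let $K\in\mathbb{N}^+$ and let $\varrho:\mathbb{R}\to\mathbb{R}$ be real analytic and not a polynomial on an interval $(\alpha,\beta)$ with $\beta>\alpha$. Then there exists $w_0\in\big(-\tfrac{\beta-\alpha}{2K},\tfrac{\beta-\alpha}{2K}\big)$ such that the numbers $\varrho\big(\tfrac{\alpha+\beta}{2}+kw_0\big)$, $k=1,2,\dots,K$, are rationally independent.
   Context: Real numbers $a_1,\dots,a_K$ are rationally independent if the only $(\lambda_1,\dots,\lambda_K)\in\mathbb{Q}^K$ with $\sum_{k=1}^K\lambda_k a_k=0$ is $(0,\dots,0)$. *)

theory Defs
  imports "HOL-Analysis.Analysis" "HOL-Computational_Algebra.Polynomial"
begin

definition real_analytic_on :: "(real \<Rightarrow> real) \<Rightarrow> real set \<Rightarrow> bool" where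
  "real_analytic_on f S \<longleftrightarrow>
     (\<forall>x0\<in>S. \<exists>r>0. \<exists>c::nat \<Rightarrow> real.
        \<forall>y. \<bar>y - x0\<bar> < r \<longrightarrow> (\<lambda>n. c n * (y - x0) ^ n) sums f y)"

definition polynomial_on :: "(real \<Rightarrow> real) \<Rightarrow> real set \<Rightarrow> bool" where
  "polynomial_on f S \<longleftrightarrow> (\<exists>p :: real poly. \<forall>x\<in>S. f x = poly p x)"

definition rationally_independent :: "nat \<Rightarrow> (nat \<Rightarrow> real) \<Rightarrow> bool" where
  "rationally_independent K a \<longleftrightarrow>
     (\<forall>l :: nat \<Rightarrow> real. (\<forall>k\<in>{1..K}. l k \<in> \<rat>) \<and> (\<Sum>k=1..K. l k * a k) = 0
        \<longrightarrow> (\<forall>k\<in>{1..K}. l k = 0))"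

end

theory Submission
  imports Defs "HOL-Complex_Analysis.Cauchy_Integral_Formula"
begin

(* For a nonzero coefficient vector l put F_l(w) = sum_k l_k rho(c + k w), with c the midpoint
   of the interval; F_l is real analytic for |w| < r = (beta - alpha) / (2K). If F_l vanished
   identically, comparing Taylor coefficients at w = 0 would give a_n (sum_k l_k k^n) = 0 for the
   Taylor coefficients a_n of rho at c. The largest k with l_k \<noteq> 0 dominates sum_k l_k k^n, so that
   factor is nonzero for large n, and rho would be a polynomial near c, hence on the whole
   interval by the identity theorem. So each F_l has only countably many zeros, and since there
   are only countably many rational l, some w0 in the uncountable interval (-r, r) is a zero of
   none of them. *)

lemma real_analytic_onE:
  assumes "real_analytic_on f S" "x \<in> S"
  obtains r a where "r > 0" "\<And>y. \<bar>y - x\<bar> < r \<Longrightarrow> (\<lambda>n. a n * (y - x) ^ n) sums f y"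
  using assms unfolding real_analytic_on_def by blast

lemma real_analytic_on_add:
  assumes "real_analytic_on f S" "real_analytic_on g S"
  shows "real_analytic_on (\<lambda>x. f x + g x) S"
  unfolding real_analytic_on_def
proof
  fix x assume "x \<in> S"
  obtain r1 a where "r1 > 0" and a: "\<And>y. \<bar>y - x\<bar> < r1 \<Longrightarrow> (\<lambda>n. a n * (y - x) ^ n) sums f y"
    using real_analytic_onE[OF assms(1) \<open>x \<in> S\<close>] by blast
  obtain r2 b where "r2 > 0" and b: "\<And>y. \<bar>y - x\<bar> < r2 \<Longrightarrow> (\<lambda>n. b n * (y - x) ^ n) sums g y"
    using real_analytic_onE[OF assms(2) \<open>x \<in> S\<close>] by blast
  have "(\<lambda>n. (a n + b n) * (y - x) ^ n) sums (f y + g y)" if "\<bar>y - x\<bar> < min r1 r2" for y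
    using sums_add[OF a b] that by (simp add: distrib_right)
  then show "\<exists>r>0. \<exists>c. \<forall>y. \<bar>y - x\<bar> < r \<longrightarrow> (\<lambda>n. c n * (y - x) ^ n) sums (f y + g y)"
    using \<open>r1 > 0\<close> \<open>r2 > 0\<close>
    by (intro exI[of _ "min r1 r2"] conjI exI[of _ "\<lambda>n. a n + b n"]) auto
qed

lemma real_analytic_on_cmult:
  assumes "real_analytic_on f S"
  shows "real_analytic_on (\<lambda>x. c * f x) S"
  unfolding real_analytic_on_def
proof
  fix x assume "x \<in> S"
  obtain r a where "r > 0" and a: "\<And>y. \<bar>y - x\<bar> < r \<Longrightarrow> (\<lambda>n. a n * (y - x) ^ n) sums f y"
    using real_analytic_onE[OF assms \<open>x \<in> S\<close>] by blast
  have "(\<lambda>n. (c * a n) * (y - x) ^ n) sums (c * f y)" if "\<bar>y - x\<bar> < r" for y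
    using sums_mult[OF a[OF that], of c] by (simp add: mult.assoc)
  then show "\<exists>r>0. \<exists>b. \<forall>y. \<bar>y - x\<bar> < r \<longrightarrow> (\<lambda>n. b n * (y - x) ^ n) sums (c * f y)"
    using \<open>r > 0\<close> by (intro exI[of _ r] conjI exI[of _ "\<lambda>n. c * a n"]) auto
qed

lemma real_analytic_on_diff:
  assumes "real_analytic_on f S" "real_analytic_on g S"
  shows "real_analytic_on (\<lambda>x. f x - g x) S"
  using real_analytic_on_add[OF assms(1) real_analytic_on_cmult[OF assms(2), of "-1"]] by simp

lemma real_analytic_on_poly: "real_analytic_on (poly p) S"
  unfolding real_analytic_on_def
proof
  fix x assume "x \<in> S"
  define q where "q = pcompose p [:x, 1:]"
  have "(\<lambda>n. coeff q n * (y - x) ^ n) sums poly p y" for y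
  proof -
    have "(\<lambda>n. coeff q n * (y - x) ^ n) sums (\<Sum>n\<le>degree q. coeff q n * (y - x) ^ n)"
      by (rule sums_finite) (auto simp: coeff_eq_0)
    also have "(\<Sum>n\<le>degree q. coeff q n * (y - x) ^ n) = poly p y"
      by (simp add: q_def poly_altdef[symmetric] poly_pcompose)
    finally show ?thesis .
  qed
  then show "\<exists>r>0. \<exists>c. \<forall>y. \<bar>y - x\<bar> < r \<longrightarrow> (\<lambda>n. c n * (y - x) ^ n) sums poly p y"
    by (intro exI[of _ 1]) auto
qed

lemma real_analytic_on_sum:
  assumes "finite I" "\<And>i. i \<in> I \<Longrightarrow> real_analytic_on (f i) S"
  shows "real_analytic_on (\<lambda>x. \<Sum>i\<in>I. f i x) S"
  using assms
proof (induction I rule: finite_induct)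
  case empty
  have "poly 0 = (\<lambda>x::real. 0)"
    by auto
  then show ?case
    using real_analytic_on_poly[of 0 S] by simp
next
  case (insert i I)
  then show ?case by (simp add: real_analytic_on_add)
qed

lemma real_analytic_on_compose_affine:
  assumes "real_analytic_on f S" "k \<noteq> 0" "\<And>w. w \<in> T \<Longrightarrow> c + k * w \<in> S"
  shows "real_analytic_on (\<lambda>w. f (c + k * w)) T"
  unfolding real_analytic_on_def
proof
  fix w0 assume "w0 \<in> T"
  obtain r a where "r > 0"
    and a: "\<And>y. \<bar>y - (c + k * w0)\<bar> < r \<Longrightarrow> (\<lambda>n. a n * (y - (c + k * w0)) ^ n) sums f y"
    using real_analytic_onE[OF assms(1) assms(3)[OF \<open>w0 \<in> T\<close>]] by blast
  have "(\<lambda>n. (a n * k ^ n) * (w - w0) ^ n) sums f (c + k * w)" if "\<bar>w - w0\<bar> < r / \<bar>k\<bar>" for w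
  proof -
    have shift: "(c + k * w) - (c + k * w0) = k * (w - w0)"
      by (simp add: algebra_simps)
    have "\<bar>k\<bar> * \<bar>w - w0\<bar> < r"
      using that assms(2) by (simp add: field_simps)
    then have "\<bar>(c + k * w) - (c + k * w0)\<bar> < r"
      by (simp only: shift abs_mult)
    from a[OF this] show ?thesis
      by (simp only: shift power_mult_distrib mult.assoc)
  qed
  then show "\<exists>r>0. \<exists>b. \<forall>w. \<bar>w - w0\<bar> < r \<longrightarrow> (\<lambda>n. b n * (w - w0) ^ n) sums f (c + k * w)"
    using \<open>r > 0\<close> assms(2)
    by (intro exI[of _ "r / \<bar>k\<bar>"] conjI exI[of _ "\<lambda>n. a n * k ^ n"]) auto
qed

lemma powser_coeffs_eq_0_if_islimpt_zeros:
  fixes a :: "nat \<Rightarrow> real"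
  assumes "r > 0" and sums: "\<And>y. \<bar>y - x\<bar> < r \<Longrightarrow> (\<lambda>n. a n * (y - x) ^ n) sums f y"
    and limpt: "x islimpt {y. f y = 0}"
  shows "a n = 0"
proof -
  have "a 0 = 0"
  proof (rule ccontr)
    assume "a 0 \<noteq> 0"
    have "(\<lambda>n. a n * h ^ n) sums f (x + h)" if "norm h < r" for h
      using sums[of "x + h"] that by simp
    then have "((\<lambda>h. f (x + h)) \<longlongrightarrow> a 0) (at 0)"
      by (rule powser_limit_0[OF \<open>r > 0\<close>])
    then have "(f \<longlongrightarrow> a 0) (at x)"
      by (simp add: LIM_offset_zero_iff)
    then have "eventually (\<lambda>y. f y \<noteq> 0) (at x)"
      using tendsto_imp_eventually_ne \<open>a 0 \<noteq> 0\<close> by blast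
    with limpt show False
      by (simp add: islimpt_iff_eventually)
  qed
  moreover have "a m = 0" if "m > 0" for m
  proof (rule ccontr)
    assume "a m \<noteq> 0"
    have "f x = a 0"
      using sums[of x] \<open>r > 0\<close> powser_sums_zero[of a] sums_unique2 by fastforce
    with \<open>a 0 = 0\<close> obtain s where "s > 0" "\<And>y. y \<in> cball x s - {x} \<Longrightarrow> f y \<noteq> 0"
      using powser_0_nonzero[of r x a f m] \<open>r > 0\<close> sums \<open>a m \<noteq> 0\<close> \<open>m > 0\<close> by auto
    with limpt show False
      unfolding islimpt_approachable by (force simp: dist_commute)
  qed
  ultimately show ?thesis
    by (cases n) auto
qed

lemma open_Collect_eventually_nhds: "open {x. eventually P (nhds x)}"
proof (rule Topological_Spaces.openI)
  fix x assume "x \<in> {x. eventually P (nhds x)}"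
  then have "eventually (\<lambda>y. eventually P (nhds y)) (nhds x)"
    by (simp add: eventually_eventually)
  then show "\<exists>T. open T \<and> x \<in> T \<and> T \<subseteq> {x. eventually P (nhds x)}"
    unfolding eventually_nhds by blast
qed

lemma islimpt_if_eventually_nhds:
  fixes x :: "'a::perfect_space"
  assumes "eventually P (nhds x)"
  shows "x islimpt {y. P y}"
proof -
  obtain U where "open U" "x \<in> U" "\<forall>y\<in>U. P y"
    using assms unfolding eventually_nhds by blast
  then show ?thesis
    by (intro islimpt_subset[OF open_imp_islimpt[OF \<open>open U\<close> \<open>x \<in> U\<close>]]) auto
qed

lemma real_analytic_on_eventually_0_if_islimpt_zeros:
  assumes "real_analytic_on g S" "z \<in> S" "z islimpt {y. g y = 0}"
  shows "eventually (\<lambda>y. g y = 0) (nhds z)"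
proof -
  obtain r a where "r > 0" and sums: "\<And>y. \<bar>y - z\<bar> < r \<Longrightarrow> (\<lambda>n. a n * (y - z) ^ n) sums g y"
    using real_analytic_onE[OF assms(1,2)] by blast
  have "a n = 0" for n
    using powser_coeffs_eq_0_if_islimpt_zeros[OF \<open>r > 0\<close> sums assms(3)] .
  then have "g y = 0" if "dist y z < r" for y
    using sums[of y] that by (simp add: dist_real_def sums_iff)
  then show ?thesis
    unfolding eventually_nhds_metric using \<open>r > 0\<close> by blast
qed

lemma real_analytic_on_eq_0_if_islimpt_zeros:
  assumes g: "real_analytic_on g S" and "open S" "connected S" "x \<in> S"
    and "x islimpt {y. g y = 0}"
  shows "\<forall>y\<in>S. g y = 0"
proof -
  define Z where "Z = {y. g y = 0}"
  have islimpt_iff: "z islimpt Z \<longleftrightarrow> eventually (\<lambda>y. g y = 0) (nhds z)" if "z \<in> S" for z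
    using real_analytic_on_eventually_0_if_islimpt_zeros[OF g that] islimpt_if_eventually_nhds
    unfolding Z_def by blast
  define A where "A = {z\<in>S. z islimpt Z}"
  have "A = S \<inter> {z. eventually (\<lambda>y. g y = 0) (nhds z)}"
    using islimpt_iff unfolding A_def by blast
  then have "open A"
    using open_Int[OF \<open>open S\<close> open_Collect_eventually_nhds] by simp
  moreover have "open (S - A)"
  proof -
    have "S - A = S \<inter> - {z. z islimpt Z}"
      unfolding A_def by blast
    then show ?thesis
      using \<open>open S\<close> by (simp add: open_Int open_Compl closed_limpts)
  qed
  ultimately have "A \<inter> S = {} \<or> (S - A) \<inter> S = {}"
    by (rule connectedD[OF \<open>connected S\<close>]) auto
  then have "S \<subseteq> A"
    using assms(4,5) unfolding A_def Z_def by blast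
  show ?thesis
  proof
    fix y assume "y \<in> S"
    with \<open>S \<subseteq> A\<close> have "eventually (\<lambda>y. g y = 0) (nhds y)"
      using islimpt_iff unfolding A_def by blast
    then show "g y = 0"
      by (rule eventually_nhds_x_imp_x)
  qed
qed

lemma real_analytic_on_zeros_countable:
  assumes "real_analytic_on g S" "open S" "connected S" "\<exists>x\<in>S. g x \<noteq> 0"
  shows "countable {x\<in>S. g x = 0}"
proof -
  have "{y. g y = 0} sparse_in S"
    using real_analytic_on_eq_0_if_islimpt_zeros assms by (auto simp: sparse_in_open)
  then have "countable (S \<inter> {y. g y = 0})"
    using sparse_imp_countable \<open>open S\<close> by blast
  then show ?thesis
    by (simp add: Int_def)
qed

lemma polynomial_on_if_eventually_poly:
  assumes "real_analytic_on f S" "open S" "connected S" "x \<in> S"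
    and "eventually (\<lambda>y. f y = poly p y) (nhds x)"
  shows "polynomial_on f S"
proof -
  have "x islimpt {y. f y - poly p y = 0}"
    using assms(5) by (simp add: islimpt_if_eventually_nhds)
  moreover have "real_analytic_on (\<lambda>y. f y - poly p y) S"
    using assms(1) real_analytic_on_poly by (rule real_analytic_on_diff)
  ultimately have "\<forall>y\<in>S. f y - poly p y = 0"
    using real_analytic_on_eq_0_if_islimpt_zeros assms(2-4) by blast
  then show ?thesis
    unfolding polynomial_on_def by auto
qed

lemma sum_mult_power_eventually_nonzero:
  fixes l :: "nat \<Rightarrow> real"
  assumes "finite A" "k \<in> A" "k > 0" "l k \<noteq> 0"
  shows "eventually (\<lambda>n. (\<Sum>j\<in>A. l j * real j ^ n) \<noteq> 0) sequentially"
proof -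
  define m where "m = Max {j\<in>A. l j \<noteq> 0}"
  have "m \<in> A" "l m \<noteq> 0" "k \<le> m"
    using Max_in[of "{j\<in>A. l j \<noteq> 0}"] Max_ge[of "{j\<in>A. l j \<noteq> 0}" k] assms
    unfolding m_def by auto
  have above_m: "l j = 0" if "j \<in> A" "j > m" for j
  proof (rule ccontr)
    assume "l j \<noteq> 0"
    then have "j \<le> m"
      unfolding m_def using \<open>finite A\<close> \<open>j \<in> A\<close> by (intro Max_ge) auto
    with \<open>j > m\<close> show False
      by simp
  qed
  have "(\<lambda>n. \<Sum>j\<in>A. l j * (real j / real m) ^ n) \<longlonglongrightarrow> (\<Sum>j\<in>A. if j = m then l m else 0)"
  proof (rule tendsto_sum)
    fix j assume "j \<in> A"
    consider "j < m" | "j = m" | "j > m"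
      by linarith
    then show "(\<lambda>n. l j * (real j / real m) ^ n) \<longlonglongrightarrow> (if j = m then l m else 0)"
    proof cases
      case 1
      then have "(\<lambda>n. (real j / real m) ^ n) \<longlonglongrightarrow> 0"
        by (intro LIMSEQ_power_zero) auto
      then show ?thesis
        using 1 by (simp add: tendsto_mult_right_zero)
    qed (use \<open>k > 0\<close> \<open>k \<le> m\<close> above_m \<open>j \<in> A\<close> in auto)
  qed
  also have "(\<Sum>j\<in>A. if j = m then l m else 0) = l m"
    using \<open>finite A\<close> \<open>m \<in> A\<close> by simp
  finally have "eventually (\<lambda>n. (\<Sum>j\<in>A. l j * (real j / real m) ^ n) \<noteq> 0) sequentially"
    using tendsto_imp_eventually_ne \<open>l m \<noteq> 0\<close> by blast
  then show ?thesis
  proof (rule eventually_mono)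
    fix n
    assume "(\<Sum>j\<in>A. l j * (real j / real m) ^ n) \<noteq> 0"
    moreover have "(\<Sum>j\<in>A. l j * real j ^ n) = real m ^ n * (\<Sum>j\<in>A. l j * (real j / real m) ^ n)"
      using \<open>k > 0\<close> \<open>k \<le> m\<close> by (simp add: sum_distrib_left power_divide)
    ultimately show "(\<Sum>j\<in>A. l j * real j ^ n) \<noteq> 0"
      using \<open>k > 0\<close> \<open>k \<le> m\<close> by simp
  qed

qed

lemma powser_coeff_mult_dilation_sum_eq_0:
  fixes \<rho> :: "real \<Rightarrow> real" and l :: "nat \<Rightarrow> real"
  assumes "R > 0" and \<rho>: "\<And>y. \<bar>y - c\<bar> < R \<Longrightarrow> (\<lambda>n. a n * (y - c) ^ n) sums \<rho> y"
    and "r > 0" and vanishes: "\<And>w. \<bar>w\<bar> < r \<Longrightarrow> (\<Sum>k=1..K. l k * \<rho> (c + real k * w)) = 0"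
  shows "a n * (\<Sum>k=1..K. l k * real k ^ n) = 0"
proof -
  define d where "d = min r (R / (real K + 1))"
  have "(\<lambda>n. (a n * (\<Sum>k=1..K. l k * real k ^ n)) * w ^ n) sums 0" if "\<bar>w\<bar> < d" for w
  proof -
    have "(\<lambda>n. a n * (real k * w) ^ n) sums \<rho> (c + real k * w)" if "k \<in> {1..K}" for k
    proof -
      have "\<bar>real k * w\<bar> \<le> (real K + 1) * \<bar>w\<bar>"
        using that by (simp add: abs_mult mult_right_mono)
      also have "\<dots> < R"
        using \<open>\<bar>w\<bar> < d\<close> by (simp add: d_def field_simps)
      finally show ?thesis
        using \<rho>[of "c + real k * w"] by simp
    qed
    then have "(\<lambda>n. \<Sum>k=1..K. l k * (a n * (real k * w) ^ n)) sums (\<Sum>k=1..K. l k * \<rho> (c + real k * w))"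
      by (intro sums_sum sums_mult)
    moreover have "(\<Sum>k=1..K. l k * \<rho> (c + real k * w)) = 0"
      using vanishes \<open>\<bar>w\<bar> < d\<close> by (simp add: d_def)
    moreover have "(\<Sum>k=1..K. l k * (a n * (real k * w) ^ n)) = (a n * (\<Sum>k=1..K. l k * real k ^ n)) * w ^ n" for n
      by (simp add: sum_distrib_left sum_distrib_right power_mult_distrib algebra_simps)
    ultimately show ?thesis
      by simp
  qed
  moreover have "d > 0"
    using \<open>r > 0\<close> \<open>R > 0\<close> by (simp add: d_def)
  ultimately show ?thesis
    by (intro powser_coeffs_eq_0_if_islimpt_zeros[of d 0 "\<lambda>n. a n * (\<Sum>k=1..K. l k * real k ^ n)" "\<lambda>_. 0" n])
      auto
qed

lemma poly_if_dilation_sum_vanishes: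
  fixes \<rho> :: "real \<Rightarrow> real" and l :: "nat \<Rightarrow> real"
  assumes "R > 0" and \<rho>: "\<And>y. \<bar>y - c\<bar> < R \<Longrightarrow> (\<lambda>n. a n * (y - c) ^ n) sums \<rho> y"
    and "r > 0" and "k0 \<in> {1..K}" "l k0 \<noteq> 0"
    and vanishes: "\<And>w. \<bar>w\<bar> < r \<Longrightarrow> (\<Sum>k=1..K. l k * \<rho> (c + real k * w)) = 0"
  obtains p where "\<And>y. \<bar>y - c\<bar> < R \<Longrightarrow> \<rho> y = poly p y"
proof -
  obtain N where "\<And>n. n \<ge> N \<Longrightarrow> (\<Sum>k=1..K. l k * real k ^ n) \<noteq> 0"
    using sum_mult_power_eventually_nonzero[of "{1..K}" k0 l] \<open>k0 \<in> {1..K}\<close> \<open>l k0 \<noteq> 0\<close>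
    unfolding eventually_sequentially by auto
  then have high: "a n = 0" if "n \<ge> N" for n
    using powser_coeff_mult_dilation_sum_eq_0[OF \<open>R > 0\<close> \<rho> \<open>r > 0\<close> vanishes, of n] that by simp
  define p where "p = (\<Sum>n<N. smult (a n) ([:-c, 1:] ^ n))"
  have "\<rho> y = poly p y" if "\<bar>y - c\<bar> < R" for y
  proof -
    have "(\<lambda>n. a n * (y - c) ^ n) sums (\<Sum>n<N. a n * (y - c) ^ n)"
      by (rule sums_finite) (auto simp: high)
    with \<rho>[OF that] show ?thesis
      by (simp add: p_def poly_sum sums_unique2)
  qed
  then show ?thesis
    using that by blast
qed

lemma countable_zeros_dilation_sum:
  fixes \<rho> :: "real \<Rightarrow> real" and l :: "nat \<Rightarrow> real"
  assumes an: "real_analytic_on \<rho> {\<alpha><..<\<beta>}" and np: "\<not> polynomial_on \<rho> {\<alpha><..<\<beta>}"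
    and "r > 0" and inside: "\<And>k w. k \<in> {1..K} \<Longrightarrow> \<bar>w\<bar> < r \<Longrightarrow> c + real k * w \<in> {\<alpha><..<\<beta>}"
    and "k0 \<in> {1..K}" "l k0 \<noteq> 0"
  shows "countable {w\<in>{-r<..<r}. (\<Sum>k=1..K. l k * \<rho> (c + real k * w)) = 0}"
proof (rule real_analytic_on_zeros_countable)
  show "real_analytic_on (\<lambda>w. \<Sum>k=1..K. l k * \<rho> (c + real k * w)) {-r<..<r}"
    using inside by (intro real_analytic_on_sum real_analytic_on_cmult real_analytic_on_compose_affine[OF an]) auto
  show "\<exists>w\<in>{-r<..<r}. (\<Sum>k=1..K. l k * \<rho> (c + real k * w)) \<noteq> 0"
  proof (rule ccontr)
    assume "\<not> ?thesis"
    then have vanishes: "\<And>w. \<bar>w\<bar> < r \<Longrightarrow> (\<Sum>k=1..K. l k * \<rho> (c + real k * w)) = 0"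
      by (auto simp: abs_less_iff)
    have "c \<in> {\<alpha><..<\<beta>}"
      using inside[of k0 0] \<open>k0 \<in> {1..K}\<close> \<open>r > 0\<close> by simp
    then obtain R a where "R > 0" and \<rho>: "\<And>y. \<bar>y - c\<bar> < R \<Longrightarrow> (\<lambda>n. a n * (y - c) ^ n) sums \<rho> y"
      using real_analytic_onE[OF an] by blast
    obtain p where "\<And>y. \<bar>y - c\<bar> < R \<Longrightarrow> \<rho> y = poly p y"
      using poly_if_dilation_sum_vanishes[OF \<open>R > 0\<close> \<rho> \<open>r > 0\<close> \<open>k0 \<in> {1..K}\<close> \<open>l k0 \<noteq> 0\<close> vanishes]
      by blast
    then have "eventually (\<lambda>y. \<rho> y = poly p y) (nhds c)"
      unfolding eventually_nhds_metric dist_real_def using \<open>R > 0\<close> by blast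
    then have "polynomial_on \<rho> {\<alpha><..<\<beta>}"
      using polynomial_on_if_eventually_poly[OF an] \<open>c \<in> {\<alpha><..<\<beta>}\<close> by simp
    with np show False ..
  qed
qed simp_all

lemma ex_rationally_independent_if_countable_zeros:
  fixes f :: "nat \<Rightarrow> 'a \<Rightarrow> real"
  assumes "uncountable T"
    and zeros: "\<And>l. \<forall>k\<in>{1..K}. l k \<in> \<rat> \<Longrightarrow> \<exists>k\<in>{1..K}. l k \<noteq> 0 \<Longrightarrow>
      countable {t\<in>T. (\<Sum>k=1..K. l k * f k t) = 0}"
  shows "\<exists>t\<in>T. rationally_independent K (\<lambda>k. f k t)"
proof -
  \<comment> \<open>Restricting to \<open>{1..K}\<close> makes the nonzero rational coefficient vectors a countable set.\<close>
  define L :: "(nat \<Rightarrow> real) set" where "L = Pi\<^sub>E {1..K} (\<lambda>_. \<rat>) - {l. \<forall>k\<in>{1..K}. l k = 0}"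
  define B where "B = (\<Union>l\<in>L. {t\<in>T. (\<Sum>k=1..K. l k * f k t) = 0})"
  have "countable L"
    unfolding L_def by (intro countable_Diff countable_PiE) (auto simp: countable_rat)
  then have "countable B"
    unfolding B_def using zeros by (intro countable_UN) (auto simp: L_def)
  with \<open>uncountable T\<close> obtain t where "t \<in> T" "t \<notin> B"
    by (meson countable_subset subsetI)
  have "rationally_independent K (\<lambda>k. f k t)"
    unfolding rationally_independent_def
  proof (intro allI impI ballI)
    fix l :: "nat \<Rightarrow> real" and k
    assume l: "(\<forall>k\<in>{1..K}. l k \<in> \<rat>) \<and> (\<Sum>k=1..K. l k * f k t) = 0" and "k \<in> {1..K}"
    show "l k = 0"
    proof (rule ccontr)
      assume "l k \<noteq> 0"
      then have "restrict l {1..K} \<in> L"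
        using l \<open>k \<in> {1..K}\<close> unfolding L_def by auto
      moreover have "(\<Sum>j=1..K. restrict l {1..K} j * f j t) = 0"
        using l by simp
      ultimately show False
        using \<open>t \<in> T\<close> \<open>t \<notin> B\<close> unfolding B_def by blast
    qed
  qed
  with \<open>t \<in> T\<close> show ?thesis
    by blast
qed

theorem lemma3:
  fixes K :: nat and rho :: "real \<Rightarrow> real" and \<alpha> \<beta> :: real
  assumes "K \<ge> 1"
    and "\<beta> > \<alpha>"
    and "real_analytic_on rho {\<alpha><..<\<beta>}"
    and "\<not> polynomial_on rho {\<alpha><..<\<beta>}"
  shows "\<exists>w0. w0 \<in> {-((\<beta> - \<alpha>) / (2 * K))<..<(\<beta> - \<alpha>) / (2 * K)} \<and>
           rationally_independent K (\<lambda>k. rho ((\<alpha> + \<beta>) / 2 + real k * w0))"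
proof -
  define r where "r = (\<beta> - \<alpha>) / (2 * real K)"
  have "r > 0"
    using assms(1,2) by (simp add: r_def)
  have inside: "(\<alpha> + \<beta>) / 2 + real k * w \<in> {\<alpha><..<\<beta>}" if "k \<in> {1..K}" "\<bar>w\<bar> < r" for k w
  proof -
    have "\<bar>real k * w\<bar> \<le> real K * \<bar>w\<bar>"
      using that by (simp add: abs_mult mult_right_mono)
    also have "\<dots> < (\<beta> - \<alpha>) / 2"
      using that assms(1) by (simp add: r_def field_simps)
    finally show ?thesis
      by (auto simp: abs_less_iff field_simps)
  qed
  have "countable {w\<in>{-r<..<r}. (\<Sum>k=1..K. l k * rho ((\<alpha> + \<beta>) / 2 + real k * w)) = 0}"
    if "k0 \<in> {1..K}" "l k0 \<noteq> 0" for k0 l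
    using assms(3,4) \<open>r > 0\<close> inside that by (rule countable_zeros_dilation_sum)
  moreover have "uncountable {-r<..<r}"
    using \<open>r > 0\<close> by (simp add: uncountable_open_interval)
  ultimately have "\<exists>w\<in>{-r<..<r}. rationally_independent K (\<lambda>k. rho ((\<alpha> + \<beta>) / 2 + real k * w))"
    by (intro ex_rationally_independent_if_countable_zeros) auto
  then show ?thesis
    unfolding r_def by auto
qed

end
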